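(* Let $\bar L>0$, $\mu\ge0$ with $\bar L\ge\mu$, $p\in(0,1]$, $\alpha,\tau,\beta\in(0,1]$ and $\Gamma_0\ge1$. Set $\theta_{\min}=\frac14\min\{1,\frac\alpha p,\frac\tau p,\frac\beta p\}$ and for $t\ge0$ let $\bar\theta_{t+1}$ be the largest root of $p\bar L\Gamma_t\theta^2+p(\bar L+\Gamma_t\mu)\theta-(\bar L+\Gamma_t\mu)=0$, $\theta_{t+1}=\min\{\bar\theta_{t+1},\theta_{\min}\}$, $\gamma_{t+1}=\frac{p\theta_{t+1}\Gamma_t}{1-p\theta_{t+1}}$, $\Gamma_{t+1}=\Gamma_t+\gamma_{t+1}$. Then: 1. $\theta_{t+1},\gamma_{t+1},\Gamma_{t+1}$ are well defined and $\theta_{t+1},\gamma_{t+1}\ge0$ for all $t\ge0$; 2. $\gamma_{t+1}=p\theta_{t+1}\Gamma_{t+1}$ for all $t\ge0$; 3. $\bar L\theta_{t+1}\gamma_{t+1}\le\bar L+\Gamma_t\mu$ for all $t\ge0$; 4. $\Gamma_t\ge\frac{\Gamma_0}{2}\exp\big(t\min\{\sqrt{\frac{p\mu}{4\bar L}},p\theta_{\min}\}\big)$ for all $t\ge0$; 5. with $\bar t=\max\{\lceil\frac{1}{p\theta_{\min}}\log\frac{1}{2\Gamma_0p\theta_{\min}^2}\rceil,0\}$, $\Gamma_t\ge\frac{\Gamma_0}{2}\exp(tp\theta_{\min})$ for $t<\bar t$ and $\Gamma_t\ge\frac{1}{4p\theta_{\min}^2}+\frac{p(t-\bar t)^2}{16}$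 for $t\ge\bar t$; 6. $(\theta_{t+1})_{t\ge0}$ is non-increasing.
   Context: These are the learning-rate sequences used by the distributed optimization method 2Direction (there $\alpha$ is the contraction parameter of the server compressor, $\tau$ a momentum, $p$ a probability, and $\beta=1/(\omega+1)$ with $\omega\ge0$). *)

theory Defs
  imports Complex_Main
begin

definition theta_min :: "real \<Rightarrow> real \<Rightarrow> real \<Rightarrow> real \<Rightarrow> real" where
  "theta_min p alpha tau beta = (1/4) * min 1 (min (alpha/p) (min (tau/p) (beta/p)))"

definition quad :: "real \<Rightarrow> real \<Rightarrow> real \<Rightarrow> real \<Rightarrow> real \<Rightarrow> real" where
  "quad L mu p G th = p * L * G * th^2 + p * (L + G * mu) * th - (L + G * mu)"

definition thetabar :: "real \<Rightarrow> real \<Rightarrow> real \<Rightarrow> real \<Rightarrow> real" where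
  "thetabar L mu p G = (GREATEST th. quad L mu p G th = 0)"

text \<open>theta_{t+1} as a function of Gamma_t.\<close>
definition theta_step :: "real \<Rightarrow> real \<Rightarrow> real \<Rightarrow> real \<Rightarrow> real \<Rightarrow> real \<Rightarrow> real \<Rightarrow> real" where
  "theta_step L mu p alpha tau beta G = min (thetabar L mu p G) (theta_min p alpha tau beta)"

text \<open>gamma_{t+1} as a function of Gamma_t.\<close>
definition gamma_step :: "real \<Rightarrow> real \<Rightarrow> real \<Rightarrow> real \<Rightarrow> real \<Rightarrow> real \<Rightarrow> real \<Rightarrow> real" where
  "gamma_step L mu p alpha tau beta G =
     p * theta_step L mu p alpha tau beta G * G / (1 - p * theta_step L mu p alpha tau beta G)"

primrec Gam :: "real \<Rightarrow> real \<Rightarrow> real \<Rightarrow> real \<Rightarrow> real \<Rightarrow> real \<Rightarrow> real \<Rightarrow> nat \<Rightarrow> real" where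
  "Gam L mu p alpha tau beta G0 0 = G0"
| "Gam L mu p alpha tau beta G0 (Suc t) =
     Gam L mu p alpha tau beta G0 t + gamma_step L mu p alpha tau beta (Gam L mu p alpha tau beta G0 t)"

end

theory Submission
  imports Defs
begin

(* One step maps Gamma to Gamma / (1 - p theta) >= Gamma exp (p theta).  At the larger root
   thetabar of the quadratic, p L Gamma thetabar^2 = (L + Gamma mu) (1 - p thetabar); this gives
   p theta >= sqrt (p mu / (4 L)), and shows that theta < theta_min forces
   Gamma >= 3 / (4 p theta_min^2).  So Gamma grows geometrically at rate p theta_min until it
   reaches the order 1 / (p theta_min^2); from then on p theta^2 Gamma >= 1/4, so sqrt Gamma
   grows by at least sqrt p / 4 per step.  Since thetabar decreases in Gamma, theta does not
   increase. *)

lemma quadratic_larger_root: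
  fixes a b c x :: real
  assumes a: "a > 0" and c: "c > 0"
  defines "r \<equiv> (sqrt (b^2 + 4*a*c) - b) / (2*a)"
  shows quadratic_larger_root_eq: "a*r^2 + b*r - c = 0"
    and quadratic_larger_root_pos: "r > 0"
    and quadratic_pos_above_larger_root: "r < x \<Longrightarrow> a*x^2 + b*x - c > 0"
proof -
  define s where "s = sqrt (b^2 + 4*a*c)"
  have s2: "s^2 = b^2 + 4*a*c"
    unfolding s_def using a c by simp
  have "\<bar>b\<bar> < s"
    unfolding s_def by (rule real_less_rsqrt) (use a c in simp)
  then have "b < s" "0 < s" by auto
  have square: "4*a*(a*y^2 + b*y - c) = (2*a*y + b - s) * (2*a*y + b + s)" for y
    using s2 by (simp add: algebra_simps power2_eq_square)
  have r_lin: "2*a*r + b - s = 0"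
    unfolding r_def s_def[symmetric] using a by simp
  show "a*r^2 + b*r - c = 0"
    using square[of r] r_lin a by simp
  show "r > 0"
    unfolding r_def s_def[symmetric] using a \<open>b < s\<close> by simp
  show "a*x^2 + b*x - c > 0" if "r < x"
  proof -
    have "2*a*r < 2*a*x" using that a by simp
    then have "0 < (2*a*x + b - s) * (2*a*x + b + s)"
      using r_lin \<open>0 < s\<close> by (intro mult_pos_pos) linarith+
    then have "0 < 4*a*(a*x^2 + b*x - c)"
      by (simp only: square)
    then show ?thesis using a by (simp add: zero_less_mult_iff)
  qed
qed

lemma exp_le_inverse_one_minus:
  fixes x :: real
  assumes "x < 1"
  shows "exp x \<le> 1 / (1 - x)"
proof -
  have "exp x * (1 - x) \<le> exp x * exp (- x)"
    using exp_minus_ge[of x] by (intro mult_left_mono) auto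
  then show ?thesis
    using assms by (simp add: exp_minus le_divide_eq)
qed

lemma sqrt_diff_ge:
  fixes x y :: real
  assumes "0 \<le> x" "x \<le> y" "0 < y"
  shows "(y - x) / (2 * sqrt y) \<le> sqrt y - sqrt x"
proof -
  have "y - x = (sqrt y - sqrt x) * (sqrt y + sqrt x)"
    using assms by (simp add: algebra_simps)
  also have "\<dots> \<le> (sqrt y - sqrt x) * (2 * sqrt y)"
    using assms by (intro mult_left_mono) auto
  finally show ?thesis
    using assms by (simp add: divide_le_eq mult.commute)
qed

lemma quad_scaling_identity:
  "G1 * quad L mu p G2 x - G2 * quad L mu p G1 x = (1 - p*x) * (G2 - G1) * L"
  unfolding quad_def by algebra

locale thetabar_setting =
  fixes L mu p :: real
  assumes L_pos: "L > 0" and mu_nonneg: "mu \<ge> 0" and p_pos: "p > 0"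
begin

context
  fixes G :: real
  assumes G_pos: "G > 0"
begin

lemma thetabar_larger_root:
  shows quad_thetabar: "quad L mu p G (thetabar L mu p G) = 0"
    and thetabar_pos: "thetabar L mu p G > 0"
    and quad_pos_above_thetabar: "thetabar L mu p G < x \<Longrightarrow> quad L mu p G x > 0"
proof -
  have a: "p*L*G > 0" and c: "L + G*mu > 0"
    using G_pos L_pos mu_nonneg p_pos by (auto intro: add_pos_nonneg)
  obtain r where root: "quad L mu p G r = 0" and "r > 0"
    and above: "\<And>x. r < x \<Longrightarrow> quad L mu p G x > 0"
    using quadratic_larger_root[OF a c, of "p*(L + G*mu)", folded quad_def] by blast
  have "thetabar L mu p G = r"
    unfolding thetabar_def
  proof (rule Greatest_equality)
    show "y \<le> r" if "quad L mu p G y = 0" for y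
      by (rule ccontr) (use above[of y] that in auto)
  qed (fact root)
  then show "quad L mu p G (thetabar L mu p G) = 0" "thetabar L mu p G > 0"
    and "thetabar L mu p G < x \<Longrightarrow> quad L mu p G x > 0"
    using root \<open>r > 0\<close> above by simp_all
qed

lemma le_thetabar_of_quad_nonpos: "quad L mu p G x \<le> 0 \<Longrightarrow> x \<le> thetabar L mu p G"
  by (rule ccontr) (use quad_pos_above_thetabar[of x] in auto)

lemma thetabar_root_eq:
  "p*L*G * (thetabar L mu p G)^2 = (L + G*mu) * (1 - p * thetabar L mu p G)"
  using quad_thetabar unfolding quad_def by (simp add: algebra_simps)

lemma p_thetabar_less_1: "p * thetabar L mu p G < 1"
proof -
  have "0 < (L + G*mu) * (1 - p * thetabar L mu p G)"
    using G_pos L_pos p_pos thetabar_pos by (simp flip: thetabar_root_eq)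
  moreover have "0 < L + G*mu"
    using G_pos L_pos mu_nonneg by (simp add: add_pos_nonneg)
  ultimately show ?thesis by (simp add: zero_less_mult_iff)
qed

lemma one_minus_le_of_quad_nonneg:
  assumes "0 \<le> quad L mu p G x" and "p*x \<le> 1"
  shows "1 - p*x \<le> p*G*x^2"
proof -
  have "L * (1 - p*x) \<le> (L + G*mu) * (1 - p*x)"
    using assms(2) G_pos mu_nonneg by (intro mult_right_mono) auto
  also have "\<dots> \<le> L * (p*G*x^2)"
    using assms(1) unfolding quad_def by (simp add: algebra_simps)
  finally show ?thesis using L_pos by simp
qed

lemma mu_le_thetabar_sq:
  assumes "p * thetabar L mu p G \<le> 1/4"
  shows "mu \<le> 4*p*L * (thetabar L mu p G)^2"
proof -
  have "(G*mu) * (3/4) \<le> (L + G*mu) * (1 - p * thetabar L mu p G)"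
    using assms G_pos L_pos mu_nonneg by (intro mult_mono) auto
  also have "\<dots> = p*L*G * (thetabar L mu p G)^2"
    by (rule thetabar_root_eq[symmetric])
  finally have "G * (mu * (3/4)) \<le> G * (p*L * (thetabar L mu p G)^2)"
    by (simp add: algebra_simps)
  then show ?thesis
    using G_pos mu_nonneg by simp
qed

end

lemma thetabar_antimono:
  assumes "0 < G1" and "G1 \<le> G2"
  shows "thetabar L mu p G2 \<le> thetabar L mu p G1"
proof (rule le_thetabar_of_quad_nonpos[OF \<open>0 < G1\<close>])
  let ?u = "thetabar L mu p G2"
  have "0 < G2" using assms by simp
  have "0 \<le> (1 - p * ?u) * (G2 - G1) * L"
    using p_thetabar_less_1[OF \<open>0 < G2\<close>] assms L_pos by simp
  then have "G2 * quad L mu p G1 ?u \<le> 0"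
    using quad_scaling_identity[of G1 L mu p G2 ?u] quad_thetabar[OF \<open>0 < G2\<close>] by simp
  then show "quad L mu p G1 ?u \<le> 0"
    using \<open>0 < G2\<close> by (simp add: mult_le_0_iff)
qed

end

locale rate_setting = thetabar_setting +
  fixes alpha tau beta :: real
  assumes p_le_1: "p \<le> 1" and alpha_pos: "alpha > 0" and tau_pos: "tau > 0"
    and beta_pos: "beta > 0"
begin

abbreviation \<theta>\<^sub>m\<^sub>i\<^sub>n where "\<theta>\<^sub>m\<^sub>i\<^sub>n \<equiv> theta_min p alpha tau beta"
abbreviation \<theta> where "\<theta> G \<equiv> theta_step L mu p alpha tau beta G"
abbreviation \<gamma> where "\<gamma> G \<equiv> gamma_step L mu p alpha tau beta G"

lemma theta_min_pos: "0 < \<theta>\<^sub>m\<^sub>i\<^sub>n"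
  unfolding theta_min_def using p_pos alpha_pos tau_pos beta_pos by simp

lemma p_theta_min_le: "p * \<theta>\<^sub>m\<^sub>i\<^sub>n \<le> 1/4"
proof -
  have "\<theta>\<^sub>m\<^sub>i\<^sub>n \<le> 1/4" unfolding theta_min_def by simp
  then show ?thesis
    using mult_mono[of p 1 "\<theta>\<^sub>m\<^sub>i\<^sub>n" "1/4"] p_le_1 theta_min_pos by simp
qed

lemma theta_le_theta_min: "\<theta> G \<le> \<theta>\<^sub>m\<^sub>i\<^sub>n"
  unfolding theta_step_def by simp

lemma theta_le_thetabar: "\<theta> G \<le> thetabar L mu p G"
  unfolding theta_step_def by simp

context
  fixes G :: real
  assumes G_pos: "G > 0"
begin

lemma theta_pos: "0 < \<theta> G"
  unfolding theta_step_def using thetabar_pos[OF G_pos] theta_min_pos by simp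

lemma p_theta_le: "p * \<theta> G \<le> 1/4"
  using mult_left_mono[OF theta_le_theta_min[of G] less_imp_le[OF p_pos]] p_theta_min_le
  by linarith

lemma step_eq: "G + \<gamma> G = G / (1 - p * \<theta> G)"
  unfolding gamma_step_def using p_theta_le by (simp add: field_simps)

lemma gamma_nonneg: "0 \<le> \<gamma> G"
  unfolding gamma_step_def using theta_pos p_theta_le p_pos G_pos by simp

lemma gamma_eq: "\<gamma> G = p * \<theta> G * (G + \<gamma> G)"
  unfolding step_eq unfolding gamma_step_def using p_theta_le by (simp add: field_simps)

lemma theta_gamma_le: "L * \<theta> G * \<gamma> G \<le> L + G * mu"
proof -
  let ?u = "thetabar L mu p G"
  have "p*L*G * (\<theta> G)^2 \<le> p*L*G * ?u^2"
    using theta_pos theta_le_thetabar G_pos L_pos p_pos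
    by (intro mult_left_mono power_mono) auto
  also have "\<dots> = (L + G*mu) * (1 - p * ?u)"
    by (rule thetabar_root_eq[OF G_pos])
  also have "\<dots> \<le> (L + G*mu) * (1 - p * \<theta> G)"
    using theta_le_thetabar G_pos L_pos mu_nonneg p_pos
    by (intro mult_left_mono) (auto intro: add_nonneg_nonneg)
  finally have "p*L*G * (\<theta> G)^2 \<le> (L + G*mu) * (1 - p * \<theta> G)" .
  moreover have "L * \<theta> G * \<gamma> G = p*L*G * (\<theta> G)^2 / (1 - p * \<theta> G)"
    unfolding gamma_step_def by (simp add: power2_eq_square)
  ultimately show ?thesis
    using p_theta_le by (simp add: pos_divide_le_eq)
qed

lemma exp_step_le: "G * exp (p * \<theta> G) \<le> G + \<gamma> G"
  unfolding step_eq
  using mult_left_mono[OF exp_le_inverse_one_minus, of "p * \<theta> G" G] p_theta_le G_pos by simp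

lemma min_rate_le_p_theta: "min (sqrt (p*mu / (4*L))) (p * \<theta>\<^sub>m\<^sub>i\<^sub>n) \<le> p * \<theta> G"
proof (cases "thetabar L mu p G \<le> \<theta>\<^sub>m\<^sub>i\<^sub>n")
  case True
  let ?u = "thetabar L mu p G"
  have u: "\<theta> G = ?u" using True unfolding theta_step_def by simp
  have "mu \<le> 4*p*L * ?u^2"
    using mu_le_thetabar_sq[OF G_pos] p_theta_le u by simp
  then have "p*mu / (4*L) \<le> (p * ?u)^2"
    using L_pos p_pos by (simp add: field_simps power2_eq_square)
  then have "sqrt (p*mu / (4*L)) \<le> p * ?u"
    using p_pos thetabar_pos[OF G_pos] by (simp add: real_le_lsqrt)
  then show ?thesis using u by simp
next
  case False
  then show ?thesis unfolding theta_step_def by simp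
qed

lemma large_if_theta_less_theta_min:
  assumes "\<theta> G < \<theta>\<^sub>m\<^sub>i\<^sub>n"
  shows "3 / (4*p*\<theta>\<^sub>m\<^sub>i\<^sub>n^2) \<le> G"
proof -
  have "thetabar L mu p G < \<theta>\<^sub>m\<^sub>i\<^sub>n"
    using assms unfolding theta_step_def by simp
  then have "1 - p*\<theta>\<^sub>m\<^sub>i\<^sub>n \<le> p*G*\<theta>\<^sub>m\<^sub>i\<^sub>n^2"
    using p_theta_min_le quad_pos_above_thetabar[OF G_pos]
    by (intro one_minus_le_of_quad_nonneg[OF G_pos]) (auto intro: less_imp_le)
  then have "3/4 \<le> G * (p*\<theta>\<^sub>m\<^sub>i\<^sub>n^2)"
    using p_theta_min_le by (simp add: algebra_simps)
  then show ?thesis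
    using p_pos theta_min_pos by (simp add: divide_le_eq mult.commute)
qed

lemma p_theta_sq_ge:
  assumes "1 / (4*p*\<theta>\<^sub>m\<^sub>i\<^sub>n^2) \<le> G"
  shows "1/4 \<le> p * (\<theta> G)^2 * G"
proof (cases "thetabar L mu p G \<le> \<theta>\<^sub>m\<^sub>i\<^sub>n")
  case True
  then have u: "\<theta> G = thetabar L mu p G" unfolding theta_step_def by simp
  have "1 - p * \<theta> G \<le> p * G * (\<theta> G)^2"
    unfolding u using quad_thetabar[OF G_pos] p_thetabar_less_1[OF G_pos]
    by (intro one_minus_le_of_quad_nonneg[OF G_pos]) auto
  then show ?thesis using p_theta_le by (simp add: algebra_simps)
next
  case False
  then have "\<theta> G = \<theta>\<^sub>m\<^sub>i\<^sub>n" unfolding theta_step_def by simp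
  then show ?thesis
    using assms p_pos theta_min_pos by (simp add: divide_le_eq algebra_simps)
qed

lemma sqrt_step_ge:
  assumes "1 / (4*p*\<theta>\<^sub>m\<^sub>i\<^sub>n^2) \<le> G"
  shows "sqrt G + sqrt p / 4 \<le> sqrt (G + \<gamma> G)"
proof -
  define H where "H = G + \<gamma> G"
  have "G \<le> H" unfolding H_def using gamma_nonneg by simp
  have "p * (\<theta> G)^2 * G \<le> p * (\<theta> G)^2 * H"
    using \<open>G \<le> H\<close> p_pos by (intro mult_left_mono) auto
  then have "1/4 \<le> p * (\<theta> G)^2 * H"
    using p_theta_sq_ge[OF assms] by linarith
  then have "p / 4 \<le> p * (p * (\<theta> G)^2 * H)"
    using mult_left_mono[of "1/4" _ p] p_pos by simp
  also have "\<dots> = (p * \<theta> G * sqrt H)^2"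
    using G_pos \<open>G \<le> H\<close> by (simp add: power_mult_distrib power2_eq_square)
  finally have "sqrt (p / 4) \<le> sqrt ((p * \<theta> G * sqrt H)^2)"
    by (rule real_sqrt_le_mono)
  then have "sqrt p / 2 \<le> p * \<theta> G * sqrt H"
    using p_pos theta_pos G_pos \<open>G \<le> H\<close> by (simp add: real_sqrt_divide)
  also have "\<dots> = 2 * ((H - G) / (2 * sqrt H))"
    using G_pos \<open>G \<le> H\<close> gamma_eq unfolding H_def by (simp add: field_simps real_div_sqrt)
  also have "\<dots> \<le> 2 * (sqrt H - sqrt G)"
    using G_pos \<open>G \<le> H\<close> by (intro mult_left_mono sqrt_diff_ge) auto
  finally show ?thesis unfolding H_def by simp
qed

end

end

locale rate_sequence = rate_setting +
  fixes G0 :: real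
  assumes G0_pos: "G0 > 0"
begin

abbreviation \<Gamma> where "\<Gamma> t \<equiv> Gam L mu p alpha tau beta G0 t"

lemma Gamma_pos: "0 < \<Gamma> t"
  by (induction t) (simp_all add: G0_pos add_pos_nonneg gamma_nonneg)

lemma Gamma_le_Suc: "\<Gamma> t \<le> \<Gamma> (Suc t)"
  using gamma_nonneg[OF Gamma_pos] by simp

lemma incseq_Gamma: "incseq \<Gamma>"
  using Gamma_le_Suc by (rule incseq_SucI)

lemma decseq_theta_Gamma: "decseq (\<lambda>t. \<theta> (\<Gamma> t))"
proof (rule decseq_SucI)
  fix t
  have "thetabar L mu p (\<Gamma> (Suc t)) \<le> thetabar L mu p (\<Gamma> t)"
    by (rule thetabar_antimono[OF Gamma_pos Gamma_le_Suc])
  then show "\<theta> (\<Gamma> (Suc t)) \<le> \<theta> (\<Gamma> t)"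
    unfolding theta_step_def by (auto intro: min.mono)
qed

lemma Gamma_ge_exp: "G0 * exp (real t * min (sqrt (p*mu / (4*L))) (p * \<theta>\<^sub>m\<^sub>i\<^sub>n)) \<le> \<Gamma> t"
proof (induction t)
  case (Suc t)
  let ?m = "min (sqrt (p*mu / (4*L))) (p * \<theta>\<^sub>m\<^sub>i\<^sub>n)"
  have "G0 * exp (real (Suc t) * ?m) = G0 * exp (real t * ?m) * exp ?m"
    by (simp add: algebra_simps flip: exp_add)
  also have "\<dots> \<le> \<Gamma> t * exp (p * \<theta> (\<Gamma> t))"
    using Suc min_rate_le_p_theta[OF Gamma_pos] less_imp_le[OF Gamma_pos]
    by (intro mult_mono) auto
  also have "\<dots> \<le> \<Gamma> (Suc t)"
    using exp_step_le[OF Gamma_pos] by simp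
  finally show ?case .
qed simp

lemma Gamma_ge_min_exp:
  "min (G0 * exp (real t * p * \<theta>\<^sub>m\<^sub>i\<^sub>n)) (3 / (4*p*\<theta>\<^sub>m\<^sub>i\<^sub>n^2)) \<le> \<Gamma> t"
proof (induction t)
  case (Suc t)
  let ?c = "3 / (4*p*\<theta>\<^sub>m\<^sub>i\<^sub>n^2)" and ?e = "exp (p * \<theta>\<^sub>m\<^sub>i\<^sub>n)"
  show ?case
  proof (cases "\<theta> (\<Gamma> t) < \<theta>\<^sub>m\<^sub>i\<^sub>n")
    case True
    then have "?c \<le> \<Gamma> t"
      by (rule large_if_theta_less_theta_min[OF Gamma_pos])
    then show ?thesis
      using Gamma_le_Suc[of t] by (simp add: min.coboundedI2)
  next
    case False
    then have theta_eq: "\<theta> (\<Gamma> t) = \<theta>\<^sub>m\<^sub>i\<^sub>n"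
      using theta_le_theta_min[of "\<Gamma> t"] by simp
    have c_le: "?c * 1 \<le> ?c * ?e"
      using p_pos theta_min_pos by (intro mult_left_mono) auto
    have "G0 * exp (real (Suc t) * p * \<theta>\<^sub>m\<^sub>i\<^sub>n) = G0 * exp (real t * p * \<theta>\<^sub>m\<^sub>i\<^sub>n) * ?e"
      by (simp add: algebra_simps flip: exp_add)
    then have "min (G0 * exp (real (Suc t) * p * \<theta>\<^sub>m\<^sub>i\<^sub>n)) ?c
        \<le> min (G0 * exp (real t * p * \<theta>\<^sub>m\<^sub>i\<^sub>n) * ?e) (?c * ?e)"
      using c_le by (intro min.mono) (simp_all only: mult_1_right order_refl)
    also have "\<dots> = min (G0 * exp (real t * p * \<theta>\<^sub>m\<^sub>i\<^sub>n)) ?c * ?e"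
      by (simp add: min_mult_distrib_right)
    also have "\<dots> \<le> \<Gamma> t * ?e"
      using Suc by (intro mult_right_mono) auto
    also have "\<dots> \<le> \<Gamma> (Suc t)"
      using exp_step_le[OF Gamma_pos[of t]] theta_eq by simp
    finally show ?thesis .
  qed
qed simp

lemma Gamma_ge_half_exp:
  assumes "G0 * exp (real t * p * \<theta>\<^sub>m\<^sub>i\<^sub>n) \<le> 1 / (2*p*\<theta>\<^sub>m\<^sub>i\<^sub>n^2)"
  shows "G0 / 2 * exp (real t * p * \<theta>\<^sub>m\<^sub>i\<^sub>n) \<le> \<Gamma> t"
proof -
  have "G0 / 2 * exp (real t * p * \<theta>\<^sub>m\<^sub>i\<^sub>n)
      \<le> min (G0 * exp (real t * p * \<theta>\<^sub>m\<^sub>i\<^sub>n)) (3 / (4*p*\<theta>\<^sub>m\<^sub>i\<^sub>n^2))"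
    using assms p_pos theta_min_pos G0_pos by (simp add: field_simps)
  then show ?thesis
    using Gamma_ge_min_exp[of t] by linarith
qed

lemma Gamma_ge_threshold:
  assumes "1 / (2*p*\<theta>\<^sub>m\<^sub>i\<^sub>n^2) \<le> G0 * exp (real t * p * \<theta>\<^sub>m\<^sub>i\<^sub>n)"
  shows "1 / (4*p*\<theta>\<^sub>m\<^sub>i\<^sub>n^2) \<le> \<Gamma> t"
proof -
  have "1 / (4*p*\<theta>\<^sub>m\<^sub>i\<^sub>n^2) \<le> 1 / (2*p*\<theta>\<^sub>m\<^sub>i\<^sub>n^2)"
    and "1 / (4*p*\<theta>\<^sub>m\<^sub>i\<^sub>n^2) \<le> 3 / (4*p*\<theta>\<^sub>m\<^sub>i\<^sub>n^2)"
    using p_pos theta_min_pos by (simp_all add: field_simps)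
  then show ?thesis
    using assms Gamma_ge_min_exp[of t] by linarith
qed

lemma sqrt_Gamma_growth:
  assumes "1 / (4*p*\<theta>\<^sub>m\<^sub>i\<^sub>n^2) \<le> \<Gamma> n"
  shows "sqrt (\<Gamma> n) + real k * sqrt p / 4 \<le> sqrt (\<Gamma> (n + k))"
proof (induction k)
  case (Suc k)
  have "1 / (4*p*\<theta>\<^sub>m\<^sub>i\<^sub>n^2) \<le> \<Gamma> (n + k)"
    using assms incseq_Gamma by (meson incseq_def le_add1 order_trans)
  then have "sqrt (\<Gamma> (n + k)) + sqrt p / 4 \<le> sqrt (\<Gamma> (n + Suc k))"
    using sqrt_step_ge[OF Gamma_pos] by simp
  then show ?case
    using Suc by (simp add: algebra_simps add_divide_distrib)
qed simp

lemma Gamma_ge_quadratic: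
  assumes "1 / (4*p*\<theta>\<^sub>m\<^sub>i\<^sub>n^2) \<le> \<Gamma> n"
  shows "1 / (4*p*\<theta>\<^sub>m\<^sub>i\<^sub>n^2) + p * (real k)^2 / 16 \<le> \<Gamma> (n + k)"
proof -
  have "\<Gamma> n + p * (real k)^2 / 16 \<le> (sqrt (\<Gamma> n) + real k * sqrt p / 4)^2"
    using Gamma_pos[of n] p_pos by (simp add: power2_sum power_mult_distrib power_divide)
  also have "\<dots> \<le> (sqrt (\<Gamma> (n + k)))^2"
    using sqrt_Gamma_growth[OF assms] Gamma_pos[of n] p_pos by (intro power_mono) auto
  also have "\<dots> = \<Gamma> (n + k)"
    using Gamma_pos[of "n + k"] by simp
  finally show ?thesis
    using assms by linarith
qed

lemma Gamma_two_phase: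
  defines "tbar \<equiv> max \<lceil>1 / (p * \<theta>\<^sub>m\<^sub>i\<^sub>n) * ln (1 / (2 * G0 * p * \<theta>\<^sub>m\<^sub>i\<^sub>n^2))\<rceil> 0"
  shows "int t < tbar \<Longrightarrow> G0 / 2 * exp (real t * p * \<theta>\<^sub>m\<^sub>i\<^sub>n) \<le> \<Gamma> t"
    and "tbar \<le> int t \<Longrightarrow>
      1 / (4 * p * \<theta>\<^sub>m\<^sub>i\<^sub>n^2) + p * (real_of_int (int t - tbar))^2 / 16 \<le> \<Gamma> t"
proof -
  define x where "x = 1 / (p * \<theta>\<^sub>m\<^sub>i\<^sub>n) * ln (1 / (2 * G0 * p * \<theta>\<^sub>m\<^sub>i\<^sub>n^2))"
  have exp_x: "G0 * exp (x * p * \<theta>\<^sub>m\<^sub>i\<^sub>n) = 1 / (2*p*\<theta>\<^sub>m\<^sub>i\<^sub>n^2)"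
    unfolding x_def using G0_pos p_pos theta_min_pos by simp
  have exp_mono: "G0 * exp (s * p * \<theta>\<^sub>m\<^sub>i\<^sub>n) \<le> G0 * exp (s' * p * \<theta>\<^sub>m\<^sub>i\<^sub>n)" if "s \<le> s'" for s s'
    using that G0_pos p_pos theta_min_pos by (simp add: mult_right_mono)
  show "G0 / 2 * exp (real t * p * \<theta>\<^sub>m\<^sub>i\<^sub>n) \<le> \<Gamma> t" if "int t < tbar"
  proof (rule Gamma_ge_half_exp)
    have "int t < \<lceil>x\<rceil>"
      using that unfolding tbar_def x_def[symmetric] by simp
    then have "real t \<le> x"
      by (simp add: less_ceiling_iff)
    then show "G0 * exp (real t * p * \<theta>\<^sub>m\<^sub>i\<^sub>n) \<le> 1 / (2*p*\<theta>\<^sub>m\<^sub>i\<^sub>n^2)"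
      using exp_mono exp_x by metis
  qed
  define n where "n = nat tbar"
  have n_eq: "int n = tbar"
    unfolding n_def tbar_def by simp
  have "x \<le> real n"
    using le_of_int_ceiling[of x] n_eq unfolding tbar_def x_def[symmetric] by linarith
  then have threshold: "1 / (4*p*\<theta>\<^sub>m\<^sub>i\<^sub>n^2) \<le> \<Gamma> n"
    using exp_mono exp_x Gamma_ge_threshold by metis
  show "1 / (4 * p * \<theta>\<^sub>m\<^sub>i\<^sub>n^2) + p * (real_of_int (int t - tbar))^2 / 16 \<le> \<Gamma> t"
    if "tbar \<le> int t"
  proof -
    have "n \<le> t"
      using that n_eq by simp
    then obtain k where "t = n + k"
      using le_Suc_ex by blast
    then show ?thesis
      using Gamma_ge_quadratic[OF threshold, of k] n_eq by simp
  qed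
qed

end

theorem lemma3:
  fixes L mu p alpha tau beta G0 :: real
  assumes "L > 0" and "mu \<ge> 0" and "L \<ge> mu"
    and "0 < p" and "p \<le> 1"
    and "0 < alpha" and "alpha \<le> 1" and "0 < tau" and "tau \<le> 1" and "0 < beta" and "beta \<le> 1"
    and "G0 \<ge> 1"
  defines "tmin \<equiv> theta_min p alpha tau beta"
    and "Gm \<equiv> Gam L mu p alpha tau beta G0"
    and "th \<equiv> (\<lambda>t. theta_step L mu p alpha tau beta (Gam L mu p alpha tau beta G0 t))"
    and "ga \<equiv> (\<lambda>t. gamma_step L mu p alpha tau beta (Gam L mu p alpha tau beta G0 t))"
  shows
    "(\<forall>t. (\<exists>r. quad L mu p (Gm t) r = 0 \<and> (\<forall>x. quad L mu p (Gm t) x = 0 \<longrightarrow> x \<le> r))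
          \<and> 1 - p * th t \<noteq> 0 \<and> th t \<ge> 0 \<and> ga t \<ge> 0)
     \<and> (\<forall>t. ga t = p * th t * Gm (Suc t))
     \<and> (\<forall>t. L * th t * ga t \<le> L + Gm t * mu)
     \<and> (\<forall>t. Gm t \<ge> G0 / 2 * exp (real t * min (sqrt (p * mu / (4 * L))) (p * tmin)))
     \<and> (let tbar = max (\<lceil>1 / (p * tmin) * ln (1 / (2 * G0 * p * tmin^2))\<rceil>) 0 in
          (\<forall>t. int t < tbar \<longrightarrow> Gm t \<ge> G0 / 2 * exp (real t * p * tmin))
        \<and> (\<forall>t. int t \<ge> tbar \<longrightarrow>
              Gm t \<ge> 1 / (4 * p * tmin^2) + p * (real_of_int (int t - tbar))^2 / 16))
     \<and> decseq th"
proof -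
  interpret rate_sequence L mu p alpha tau beta G0
    using assms by unfold_locales auto
  have greatest_root:
    "\<exists>r. quad L mu p (\<Gamma> t) r = 0 \<and> (\<forall>x. quad L mu p (\<Gamma> t) x = 0 \<longrightarrow> x \<le> r)" for t
    using quad_thetabar[OF Gamma_pos] le_thetabar_of_quad_nonpos[OF Gamma_pos] by fastforce
  have step_denominator: "1 - p * \<theta> (\<Gamma> t) \<noteq> 0" for t
    using p_theta_le[OF Gamma_pos[of t]] by simp
  have half_Gamma_ge_exp:
    "G0 / 2 * exp (real t * min (sqrt (p * mu / (4 * L))) (p * \<theta>\<^sub>m\<^sub>i\<^sub>n)) \<le> \<Gamma> t" for t
    using Gamma_ge_exp[of t] Gamma_pos[of t] by (simp; linarith)
  have gamma_Gamma: "\<gamma> (\<Gamma> t) = p * \<theta> (\<Gamma> t) * \<Gamma> (Suc t)" for t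
    unfolding Gam.simps by (rule gamma_eq[OF Gamma_pos])
  show ?thesis
    unfolding Gm_def th_def ga_def tmin_def Let_def
    by (intro conjI allI impI)
      (rule greatest_root step_denominator less_imp_le[OF theta_pos[OF Gamma_pos]]
        gamma_nonneg[OF Gamma_pos] gamma_Gamma theta_gamma_le[OF Gamma_pos] half_Gamma_ge_exp
        Gamma_two_phase decseq_theta_Gamma | assumption)+
qed

end
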